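(* Let $V_1,\dots,V_d$ be uniform random variables whose joint distribution is a copula $C^*$ with density $c^*$. Let $Z_1,\dots,Z_d$ be i.i.d. $\mathcal{U}(0,1)$ random variables, independent of $(V_1,\dots,V_d)$. Let $T_1,\dots,T_d$ be regular uniform-distribution-preserving transformations. Then the random vector $\big(T_1^\leftarrow(V_1,Z_1),\dots,T_d^\leftarrow(V_d,Z_d)\big)$ has density $$c(u_1,\dots,u_d)=c^*\big(T_1(u_1),\dots,T_d(u_d)\big).$$
   Context: A function $T:[0,1]\to[0,1]$ is uniform-distribution-preserving (udp) if $T(U)\sim\mathcal{U}(0,1)$ whenever $U\sim\mathcal{U}(0,1)$. A udp transformation is regular if there is a finite partition $0=a_0<a_1<\dots<a_L=1$ such that $T$ is continuously differentiable on each $A_\ell=(a_{\ell-1},a_\ell)$. Let $A=\bigcup_\ell A_\ell$. The stochastic inverse of a regular udp $T$: for $x\in T(A)$, let $\{u\in A:T(u)=x\}=\{r_1(x),\dots,r_{n(x)}(x)\}$ (a finite set, with the weights below summing to one); let $G_x$ be the distribution function of the discrete random variable taking value $r_i(x)$ with probability $1/|T'(r_i(x))|$, and set $T^\leftarrow(x,Z)=G_x^{-1}(Z)$ with $G^{-1}(z)=\inf\{t:G(t)\ge z\}$; for $x\notin T(A)$ set $T^\leftarrow(x,Z)=0$. *)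

theory Defs
  imports "HOL-Probability.Probability"
begin

text \<open>The uniform law on [0,1] is the restriction of Lebesgue
  measure to [0,1] (as a source space) and uniform_measure lborel {0..1} (as a law on the reals).\<close>
definition udp :: "(real \<Rightarrow> real) \<Rightarrow> bool" where
  "udp T \<longleftrightarrow> (\<forall>u\<in>{0..1}. T u \<in> {0..1})
     \<and> T \<in> measurable (restrict_space lborel {0..1}) borel
     \<and> distr (restrict_space lborel {0..1}) borel T = uniform_measure lborel {0..1}"

definition regular_partition :: "(real \<Rightarrow> real) \<Rightarrow> (nat \<Rightarrow> real) \<Rightarrow> nat \<Rightarrow> bool" where
  "regular_partition T a L \<longleftrightarrow> L \<ge> 1 \<and> a 0 = 0 \<and> a L = 1
     \<and> (\<forall>l<L. a l < a (Suc l))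
     \<and> (\<forall>l<L. T C1_differentiable_on {a l<..<a (Suc l)})"

definition partition_set :: "(nat \<Rightarrow> real) \<Rightarrow> nat \<Rightarrow> real set" where
  "partition_set a L = (\<Union>l<L. {a l<..<a (Suc l)})"

definition regular_udp :: "(real \<Rightarrow> real) \<Rightarrow> (nat \<Rightarrow> real) \<Rightarrow> nat \<Rightarrow> bool" where
  "regular_udp T a L \<longleftrightarrow> udp T \<and> regular_partition T a L"

definition gen_inv :: "(real \<Rightarrow> real) \<Rightarrow> real \<Rightarrow> real" where
  "gen_inv G z = Inf {t. G t \<ge> z}"

definition preimage_cdf :: "(real \<Rightarrow> real) \<Rightarrow> real set \<Rightarrow> real \<Rightarrow> real \<Rightarrow> real" where
  "preimage_cdf T A x t = (\<Sum>r\<in>{r\<in>A. T r = x \<and> r \<le> t}. 1 / \<bar>deriv T r\<bar>)"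

definition stoch_inv :: "(real \<Rightarrow> real) \<Rightarrow> real set \<Rightarrow> real \<Rightarrow> real \<Rightarrow> real" where
  "stoch_inv T A x z = (if x \<in> T ` A then gen_inv (preimage_cdf T A x) z else 0)"

definition unit_cube :: "(real^'d) set" where
  "unit_cube = {u. \<forall>i. u $ i \<in> {0..1}}"

end

theory Submission
  imports Defs
begin

text \<open>On each piece of its partition a regular udp map T is injective with a
  continuous, nowhere vanishing derivative: a vanishing derivative would squeeze an interval
  into a shorter one, contradicting that T preserves Lebesgue measure on [0,1]. Hence
  G x t = preimage_cdf T A x t, the sum of 1/|T'(r)| over the preimages r \<le> t of x, is a
  step function in t, and the change of variables formula on each piece yields
  \<integral> G v t * indicator B v dv = \<lambda>{u \<in> [0,1]. u \<le> t \<and> T u \<in> B}; in particular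
  G x 1 = 1 for almost every x \<in> [0,1]. For 0 < z \<le> G x 1 the stochastic inverse satisfies
  T^\<leftarrow>(x, z) \<le> t \<longleftrightarrow> z \<le> G x t, so by independence
  P(X \<le> b) = E (\<Prod>i. G_i V_i b_i) = \<integral> c*(v) (\<Prod>i. G_i v_i b_i) dv.
  The same product formula computes the mass of {u \<le> b} under the density
  c*(T_1 u_1, ..., T_d u_d) on the unit cube, and laws on \<real>^d with equal distribution
  functions coincide.\<close>

section \<open>Distribution functions and independence on \<real>^d\<close>

lemma measure_eqI_atMost:
  fixes M N :: "'b::ordered_euclidean_space measure"
  assumes sets_M: "sets M = sets borel" and sets_N: "sets N = sets borel"
    and eq: "\<And>x. emeasure M {..x} = emeasure N {..x}"
    and finite: "\<And>x. emeasure M {..x} \<noteq> \<infinity>"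
  shows "M = N"
proof (rule measure_eqI_generator_eq[where E="range atMost" and \<Omega>=UNIV
      and A="\<lambda>n. {..(\<Sum>i\<in>Basis. real n *\<^sub>R i)}"])
  show "Int_stable (range atMost :: 'b set set)"
  proof -
    have "{..x} \<inter> {..y} = {..inf x y}" for x y :: 'b
      by auto
    then show ?thesis
      by (auto simp: Int_stable_def)
  qed
  show "sets M = sigma_sets UNIV (range atMost)" "sets N = sigma_sets UNIV (range atMost)"
    by (simp_all add: sets_M sets_N borel_eq_atMost)
  have "\<exists>n::nat. x \<le> (\<Sum>i\<in>Basis. real n *\<^sub>R i)" for x :: 'b
  proof -
    obtain n :: nat where n: "Max ((\<bullet>) x ` Basis) \<le> real n"
      using real_arch_simple by blast
    have "x \<bullet> i \<le> real n" if "i \<in> Basis" for i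
      using that n by (meson Max_ge finite_Basis finite_imageI imageI order_trans)
    then have "x \<le> (\<Sum>i\<in>Basis. real n *\<^sub>R i)"
      by (simp add: eucl_le[where 'a='b] inner_sum_left inner_Basis if_distrib cong: if_cong)
    then show ?thesis ..
  qed
  then show "(\<Union>n. {..(\<Sum>i\<in>Basis. real n *\<^sub>R i)}) = (UNIV :: 'b set)"
    by auto
qed (use eq finite in auto)

lemma borel_measurable_vec:
  fixes f :: "'a \<Rightarrow> real^'n"
  assumes "\<And>i. (\<lambda>x. f x $ i) \<in> borel_measurable M"
  shows "f \<in> borel_measurable M"
  unfolding borel_measurable_euclidean_space[where 'c="real^'n"]
  using assms by (auto simp: Basis_vec_def inner_axis)

lemma nn_integral_lborel_prod_vec:
  fixes g :: "'n::finite \<Rightarrow> real \<Rightarrow> ennreal"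
  assumes "\<And>i. g i \<in> borel_measurable borel"
  shows "(\<integral>\<^sup>+u. (\<Prod>i\<in>UNIV. g i (u $ i)) \<partial>(lborel :: (real^'n) measure))
    = (\<Prod>i\<in>UNIV. \<integral>\<^sup>+x. g i x \<partial>lborel)"
proof -
  define f where "f b = g (SOME i. b = axis i 1)" for b :: "real^'n"
  have f_axis: "f (axis i 1) = g i" for i
    by (simp add: f_def axis_eq_axis)
  have Basis_eq: "(Basis :: (real^'n) set) = range (\<lambda>i. axis i 1)"
    by (auto simp: Basis_vec_def)
  have prod_Basis: "(\<Prod>b\<in>Basis. h b) = (\<Prod>i\<in>UNIV. h (axis i 1))" for h :: "real^'n \<Rightarrow> ennreal"
    unfolding Basis_eq by (subst prod.reindex) (auto simp: inj_on_def axis_eq_axis)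
  have "(\<integral>\<^sup>+u. (\<Prod>i\<in>UNIV. g i (u $ i)) \<partial>(lborel :: (real^'n) measure))
      = (\<integral>\<^sup>+u. (\<Prod>b\<in>Basis. f b (u \<bullet> b)) \<partial>lborel)"
    by (simp add: prod_Basis f_axis cart_eq_inner_axis)
  also have "\<dots> = (\<Prod>b\<in>Basis. \<integral>\<^sup>+x. f b x \<partial>lborel)"
    by (rule nn_integral_lborel_prod) (use assms in \<open>auto simp: Basis_eq f_axis\<close>)
  also have "\<dots> = (\<Prod>i\<in>UNIV. \<integral>\<^sup>+x. g i x \<partial>lborel)"
    by (simp add: prod_Basis f_axis)
  finally show ?thesis .
qed

lemma prod_indicator_vec:
  fixes u :: "'b^'n"
  shows "(\<Prod>i\<in>UNIV. indicator (S i) (u $ i) :: ennreal) = indicator {u. \<forall>i. u $ i \<in> S i} u"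
proof (cases "\<forall>i. u $ i \<in> S i")
  case False
  then obtain j where "u $ j \<notin> S j" by auto
  then have "(\<Prod>i\<in>UNIV. indicator (S i) (u $ i) :: ennreal) = 0"
    by (intro prod_zero) (auto intro!: exI[of _ j] simp: indicator_def)
  then show ?thesis using False by simp
qed simp

lemma indicator_atMost_vec: "(indicator {..c} u :: ennreal) = (\<Prod>i\<in>UNIV. indicator {..c $ i} (u $ i))"
  unfolding prod_indicator_vec by (simp add: indicator_def less_eq_vec_def)

lemma (in prob_space) emeasure_le_vec_indep:
  fixes Z :: "'a \<Rightarrow> real^'d"
  assumes indep: "indep_vars (\<lambda>_. borel) (\<lambda>i \<omega>. Z \<omega> $ i) UNIV"
  shows "emeasure M {\<omega>\<in>space M. Z \<omega> \<le> c} = (\<Prod>i\<in>UNIV. emeasure M {\<omega>\<in>space M. Z \<omega> $ i \<le> c $ i})"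
proof -
  let ?E = "\<lambda>i. {\<omega>\<in>space M. Z \<omega> $ i \<le> c $ i}"
  have "indep_sets (\<lambda>i. {(\<lambda>\<omega>. Z \<omega> $ i) -` B \<inter> space M | B. B \<in> sets borel}) UNIV"
    using indep unfolding indep_vars_def2 by simp
  moreover have "?E i \<in> {(\<lambda>\<omega>. Z \<omega> $ i) -` B \<inter> space M | B. B \<in> sets borel}" for i
    by (intro CollectI exI[of _ "{..c $ i}"]) auto
  ultimately have "prob (\<Inter>i. ?E i) = (\<Prod>i\<in>UNIV. prob (?E i))"
    by (intro indep_setsD) auto
  moreover have "{\<omega>\<in>space M. Z \<omega> \<le> c} = (\<Inter>i. ?E i)"
    by (auto simp: less_eq_vec_def)
  ultimately show ?thesis
    by (simp add: emeasure_eq_measure prod_ennreal)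
qed

lemma (in prob_space) emeasure_le_uniform:
  assumes "distributed M lborel X (indicator {0..1})" and "t \<in> {0..1}"
  shows "emeasure M {\<omega>\<in>space M. X \<omega> \<le> t} = ennreal t"
proof -
  have "emeasure M {\<omega>\<in>space M. X \<omega> \<le> t} = emeasure M (X -` {..t} \<inter> space M)"
    by (simp add: Int_def conj_commute)
  also have "\<dots> = emeasure (density lborel (indicator {0..1})) {..t}"
    using assms(1) by (simp add: distributed_emeasure emeasure_density)
  also have "\<dots> = ennreal t"
    using assms(2) by (simp add: emeasure_restricted)
  finally show ?thesis .
qed

lemma (in prob_space) emeasure_indep_var_Pair:
  assumes indep: "indep_var N1 V N2 Z" and Q: "Q \<in> sets (N1 \<Otimes>\<^sub>M N2)"
  shows "emeasure M {\<omega>\<in>space M. (V \<omega>, Z \<omega>) \<in> Q}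
    = (\<integral>\<^sup>+v. emeasure (distr M N2 Z) (Pair v -` Q) \<partial>distr M N1 V)"
proof -
  have V: "random_variable N1 V" and Z: "random_variable N2 Z"
    and joint: "distr M N1 V \<Otimes>\<^sub>M distr M N2 Z = distr M (N1 \<Otimes>\<^sub>M N2) (\<lambda>\<omega>. (V \<omega>, Z \<omega>))"
    using indep by (simp_all add: indep_var_distribution_eq)
  interpret Z_law: prob_space "distr M N2 Z"
    using Z by (rule prob_space_distr)
  have "emeasure M {\<omega>\<in>space M. (V \<omega>, Z \<omega>) \<in> Q} = emeasure (distr M (N1 \<Otimes>\<^sub>M N2) (\<lambda>\<omega>. (V \<omega>, Z \<omega>))) Q"
    using V Z Q by (subst emeasure_distr) (auto simp: Int_def conj_commute)
  also have "\<dots> = (\<integral>\<^sup>+v. emeasure (distr M N2 Z) (Pair v -` Q) \<partial>distr M N1 V)"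
    using Q by (simp flip: joint add: Z_law.emeasure_pair_measure_alt)
  finally show ?thesis .
qed

lemma (in prob_space) emeasure_le_indep_uniform_vec:
  fixes V Z :: "'a \<Rightarrow> real^'d" and g :: "'d \<Rightarrow> real^'d \<Rightarrow> real"
  assumes Z_unif: "\<And>i. distributed M lborel (\<lambda>\<omega>. Z \<omega> $ i) (indicator {0..1})"
    and Z_indep: "indep_vars (\<lambda>_. borel) (\<lambda>i \<omega>. Z \<omega> $ i) UNIV"
    and VZ_indep: "indep_var borel V borel Z"
    and g: "\<And>i. g i \<in> borel_measurable borel"
    and g_01: "AE \<omega> in M. \<forall>i. g i (V \<omega>) \<in> {0..1}"
  shows "emeasure M {\<omega>\<in>space M. \<forall>i. Z \<omega> $ i \<le> g i (V \<omega>)}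
    = (\<integral>\<^sup>+\<omega>. (\<Prod>i\<in>UNIV. ennreal (g i (V \<omega>))) \<partial>M)"
proof -
  define Q where "Q = {p :: (real^'d) \<times> (real^'d). \<forall>i. snd p $ i \<le> g i (fst p)}"
  have V[measurable]: "V \<in> borel_measurable M"
    using VZ_indep by (rule indep_var_rv1)
  have [measurable]: "(\<lambda>p :: (real^'d) \<times> (real^'d). snd p $ i) \<in> borel_measurable (borel \<Otimes>\<^sub>M borel)" for i
    by (rule measurable_compose[OF measurable_snd]) simp
  have [measurable]: "(\<lambda>p. g i (fst p)) \<in> borel_measurable (borel \<Otimes>\<^sub>M borel)" for i
    by (rule measurable_compose[OF measurable_fst g])
  have "Measurable.pred (borel \<Otimes>\<^sub>M borel) (\<lambda>p :: (real^'d) \<times> (real^'d). \<forall>i\<in>UNIV. snd p $ i \<le> g i (fst p))"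
    by (intro pred_intros_finite(3)) measurable
  then have Q_sets: "Q \<in> sets (borel \<Otimes>\<^sub>M borel)"
    by (simp add: Q_def pred_def space_pair_measure)
  note g[measurable]
  have "Measurable.pred borel (\<lambda>v. \<forall>i\<in>UNIV. g i v \<in> {0..1})"
    by (intro pred_intros_finite(3)) measurable
  then have "AE v in distr M borel V. \<forall>i. g i v \<in> {0..1}"
    using g_01 by (subst AE_distr_iff) auto
  then have "AE v in distr M borel V. emeasure (distr M borel Z) (Pair v -` Q) = (\<Prod>i\<in>UNIV. ennreal (g i v))"
  proof (rule AE_mp, intro AE_I2 impI)
    fix v assume g_v: "\<forall>i. g i v \<in> {0..1}"
    have Z: "Z \<in> borel_measurable M"
      using VZ_indep by (rule indep_var_rv2)
    have "emeasure (distr M borel Z) (Pair v -` Q) = emeasure M {\<omega>\<in>space M. Z \<omega> \<le> (\<chi> i. g i v)}"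
      using Z by (subst emeasure_distr) (auto simp: Q_def less_eq_vec_def Int_def conj_commute)
    also have "\<dots> = (\<Prod>i\<in>UNIV. ennreal (g i v))"
      using g_v by (simp add: emeasure_le_vec_indep[OF Z_indep] emeasure_le_uniform[OF Z_unif])
    finally show "emeasure (distr M borel Z) (Pair v -` Q) = (\<Prod>i\<in>UNIV. ennreal (g i v))" .
  qed
  then have "emeasure M {\<omega>\<in>space M. (V \<omega>, Z \<omega>) \<in> Q} = (\<integral>\<^sup>+v. (\<Prod>i\<in>UNIV. ennreal (g i v)) \<partial>distr M borel V)"
    by (simp add: emeasure_indep_var_Pair[OF VZ_indep Q_sets] cong: nn_integral_cong_AE)
  then show ?thesis
    by (simp add: Q_def nn_integral_distr)
qed

section \<open>Regular udp transformations\<close>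

locale regular_udp_transform =
  fixes T :: "real \<Rightarrow> real" and a :: "nat \<Rightarrow> real" and L :: nat
  assumes regular: "regular_udp T a L"
begin

abbreviation A :: "real set" where "A \<equiv> partition_set a L"

definition piece :: "nat \<Rightarrow> real set" where "piece l = {a l<..<a (Suc l)}"

lemma a_0: "a 0 = 0" and a_L: "a L = 1" and a_less_Suc: "l < L \<Longrightarrow> a l < a (Suc l)"
  and C1_differentiable_on_piece: "l < L \<Longrightarrow> T C1_differentiable_on piece l"
  and udp: "udp T"
  using regular unfolding regular_udp_def regular_partition_def piece_def by auto

lemma a_less: "l < m \<Longrightarrow> m \<le> L \<Longrightarrow> a l < a m"
proof (induction m rule: less_Suc_induct)
  case (1 i)
  then show ?case using a_less_Suc by simp
next
  case (2 i j k)
  then show ?case by force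
qed

lemma a_le: "l \<le> m \<Longrightarrow> m \<le> L \<Longrightarrow> a l \<le> a m"
  using a_less[of l m] by (cases "l = m") auto

lemma piece_subset: "l < L \<Longrightarrow> piece l \<subseteq> {0<..<1}"
  using a_le[of 0 l] a_le[of "Suc l" L] a_0 a_L by (auto simp: piece_def)

lemma partition_set_eq: "A = (\<Union>l<L. piece l)"
  by (simp add: partition_set_def piece_def)

lemma partition_set_subset: "A \<subseteq> {0<..<1}"
  using piece_subset partition_set_eq by auto

lemma disjoint_pieces:
  assumes "l < L" "m < L" "l \<noteq> m" shows "piece l \<inter> piece m = {}"
proof -
  have "piece l \<inter> piece m = {}" if "l < m" "m < L" for l m
    using a_le[of "Suc l" m] that by (auto simp: piece_def)
  then show ?thesis using assms by (metis Int_commute linorder_neqE_nat)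
qed

lemma open_piece: "open (piece l)"
  by (simp add: piece_def)

lemma sets_piece: "piece l \<in> sets borel"
  by (simp add: piece_def)

lemma Icc_minus_endpoints_subset: "{0..1} - a ` {..L} \<subseteq> A"
proof
  fix x assume x: "x \<in> {0..1} - a ` {..L}"
  define K where "K = {k. k \<le> L \<and> a k < x}"
  define l where "l = Max K"
  have K: "finite K" "0 \<in> K"
    using x a_0 by (force simp: K_def)+
  then have "l \<in> K"
    unfolding l_def by (intro Max_in) auto
  then have l: "l \<le> L" "a l < x"
    by (auto simp: K_def)
  then have "l < L"
    using x a_L by (metis DiffD1 atLeastAtMost_iff le_neq_implies_less not_le)
  have "Suc l \<notin> K"
    using Max_ge[OF K(1), of "Suc l"] by (auto simp: l_def)
  then have "\<not> a (Suc l) < x"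
    using \<open>l < L\<close> by (auto simp: K_def)
  moreover have "a (Suc l) \<noteq> x"
    using x \<open>l < L\<close> by auto
  ultimately have "x \<in> piece l"
    using l by (auto simp: piece_def)
  then show "x \<in> A"
    using \<open>l < L\<close> partition_set_eq by auto
qed

lemma has_real_derivative_piece: "l < L \<Longrightarrow> x \<in> piece l \<Longrightarrow> (T has_real_derivative deriv T x) (at x)"
  and continuous_on_deriv_piece: "l < L \<Longrightarrow> continuous_on (piece l) (deriv T)"
proof -
  assume l: "l < L"
  obtain D where D: "\<And>x. x \<in> piece l \<Longrightarrow> (T has_real_derivative D x) (at x)"
    and cont_D: "continuous_on (piece l) D"
    using C1_differentiable_on_piece[OF l]
    by (auto simp: C1_differentiable_on_def has_real_derivative_iff_has_vector_derivative)
  then have deriv_eq: "\<And>x. x \<in> piece l \<Longrightarrow> deriv T x = D x"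
    by (intro DERIV_imp_deriv) simp
  show "x \<in> piece l \<Longrightarrow> (T has_real_derivative deriv T x) (at x)" for x
    using D deriv_eq by simp
  show "continuous_on (piece l) (deriv T)"
    using cont_D deriv_eq continuous_on_cong by blast
qed

lemma continuous_on_piece: "l < L \<Longrightarrow> S \<subseteq> piece l \<Longrightarrow> continuous_on S T"
  by (meson DERIV_isCont continuous_at_imp_continuous_on has_real_derivative_piece subsetD)

lemma measurable_T: "T \<in> borel_measurable (restrict_space lborel {0..1})"
  and distr_T: "distr (restrict_space lborel {0..1}) borel T = uniform_measure lborel {0..1}"
  using udp unfolding udp_def by blast+

lemma sets_preimage:
  assumes "B \<in> sets borel" shows "{0..1} \<inter> T -` B \<in> sets borel"
proof -
  have "T -` B \<inter> space (restrict_space lborel {0..1}) \<in> sets (restrict_space lborel {0..1})"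
    using measurable_T assms by (rule measurable_sets)
  then show ?thesis
    by (subst (asm) sets_restrict_space_iff) (auto simp: Int_commute)
qed

lemma emeasure_preimage:
  assumes B: "B \<in> sets borel"
  shows "emeasure lborel ({0..1} \<inter> T -` B) = emeasure lborel ({0..1} \<inter> B)"
proof -
  have "emeasure lborel ({0..1} \<inter> T -` B) = emeasure (restrict_space lborel {0..1}) (T -` B \<inter> {0..1})"
    using sets_preimage[OF B] by (subst emeasure_restrict_space) (auto simp: Int_commute)
  also have "\<dots> = emeasure (distr (restrict_space lborel {0..1}) borel T) B"
    using measurable_T B by (subst emeasure_distr) auto
  also have "\<dots> = emeasure lborel ({0..1} \<inter> B)"
    using B by (simp add: distr_T Int_commute divide_ennreal_def)
  finally show ?thesis .
qed

lemma abs_diff_le_cball: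
  assumes l: "l < L" and ball: "cball x d \<subseteq> piece l"
    and bound: "\<And>z. z \<in> cball x d \<Longrightarrow> \<bar>deriv T z\<bar> \<le> B" and y: "y \<in> cball x d"
  shows "\<bar>T y - T x\<bar> \<le> B * d"
proof -
  have "norm (T y - T x) \<le> B * norm (y - x)"
  proof (rule field_differentiable_bound[OF convex_cball])
    show "(T has_field_derivative deriv T z) (at z within cball x d)" if "z \<in> cball x d" for z
      using ball that by (blast intro: has_field_derivative_at_within has_real_derivative_piece[OF l])
  qed (use bound y in \<open>auto simp: dist_norm\<close>)
  moreover have "0 \<le> B"
    using bound[OF y] abs_ge_zero order_trans by blast
  then have "B * norm (y - x) \<le> B * d"
    using y by (intro mult_left_mono) (auto simp: dist_norm norm_minus_commute)
  ultimately show ?thesis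
    by simp
qed

text \<open>A vanishing derivative at x would let T squeeze a neighbourhood of x of length 2d into an
  interval of length d, contradicting the preservation of Lebesgue measure on [0,1].\<close>
lemma deriv_nonzero:
  assumes l: "l < L" and x: "x \<in> piece l" shows "deriv T x \<noteq> 0"
proof
  assume deriv_0: "deriv T x = 0"
  obtain d where d: "d > 0" "cball x d \<subseteq> piece l" "\<And>z. z \<in> cball x d \<Longrightarrow> \<bar>deriv T z\<bar> \<le> 1/2"
  proof -
    have "isCont (deriv T) x"
      using continuous_on_deriv_piece[OF l] x open_piece continuous_on_eq_continuous_at by blast
    then obtain e where e: "e > 0" "\<And>y. dist y x < e \<Longrightarrow> dist (deriv T y) (deriv T x) < 1/2"
      unfolding continuous_at_eps_delta by (metis half_gt_zero_iff less_numeral_extra(1))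
    obtain r where r: "r > 0" "cball x r \<subseteq> piece l"
      using open_piece x open_contains_cball by blast
    have "cball x (min (e/2) r) \<subseteq> cball x r"
      by (rule subset_cball) simp
    then have "cball x (min (e/2) r) \<subseteq> piece l"
      using r(2) by (rule order_trans)
    moreover have "\<bar>deriv T z\<bar> \<le> 1/2" if "z \<in> cball x (min (e/2) r)" for z
    proof -
      have "dist z x < e"
        using that e(1) by (simp add: dist_commute)
      then show ?thesis
        using e(2)[of z] deriv_0 by (simp add: dist_real_def)
    qed
    ultimately show ?thesis
      using e(1) r(1) by (intro that[of "min (e/2) r"]) auto
  qed
  define J where "J = {T x - d/2..T x + d/2}"
  have "{x - d..x + d} \<subseteq> {0..1} \<inter> T -` J"
  proof
    fix y assume "y \<in> {x - d..x + d}"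
    then have y: "y \<in> cball x d"
      by (simp add: cball_eq_atLeastAtMost)
    have "\<bar>T y - T x\<bar> \<le> d/2"
      using abs_diff_le_cball[OF l d(2,3) y] by simp
    then have "T y \<in> J"
      unfolding J_def atLeastAtMost_iff by (simp only: abs_diff_le_iff)
    moreover have "y \<in> {0<..<1}"
      using y d(2) piece_subset[OF l] by blast
    ultimately show "y \<in> {0..1} \<inter> T -` J"
      by simp
  qed
  then have "emeasure lborel {x - d..x + d} \<le> emeasure lborel ({0..1} \<inter> T -` J)"
    by (rule emeasure_mono) (simp add: sets_preimage J_def)
  also have "\<dots> = emeasure lborel ({0..1} \<inter> J)"
    by (simp add: emeasure_preimage J_def)
  also have "\<dots> \<le> emeasure lborel J"
    by (rule emeasure_mono) (auto simp: J_def)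
  finally have "ennreal (2 * d) \<le> ennreal d"
    using d by (simp add: J_def)
  then show False
    using d by simp
qed

lemma inj_on_piece: assumes l: "l < L" shows "inj_on T (piece l)"
proof -
  have "T x \<noteq> T y" if xy: "x \<in> piece l" "y \<in> piece l" "x < y" for x y
  proof
    assume "T x = T y"
    have sub: "{x..y} \<subseteq> piece l"
      using xy by (auto simp: piece_def)
    then obtain z where z: "x < z" "z < y" "DERIV T z :> 0"
      using Rolle[OF \<open>x < y\<close> \<open>T x = T y\<close>] continuous_on_piece[OF l sub]
        has_real_derivative_piece[OF l] real_differentiable_def
      by (metis atLeastAtMost_iff less_imp_le subsetD)
    moreover have "z \<in> piece l"
      using z sub by auto
    ultimately show False
      using deriv_nonzero[OF l] DERIV_imp_deriv by blast
  qed
  then show ?thesis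
    by (metis inj_onI linorder_neqE_linordered_idom)
qed

lemma borel_measurable_indicator_mult:
  "(\<lambda>x. indicator {0..1} x * T x) \<in> borel_measurable borel"
  using measurable_T by (subst (asm) borel_measurable_restrict_space_iff) (auto simp: mult.commute)

definition piece_inv :: "nat \<Rightarrow> real \<Rightarrow> real" where
  "piece_inv l = the_inv_into (piece l) T"

definition piece_weight :: "nat \<Rightarrow> real \<Rightarrow> real \<Rightarrow> real" where
  "piece_weight l b x =
     (if x \<in> T ` (piece l \<inter> {..b}) then 1 / \<bar>deriv T (piece_inv l x)\<bar> else 0)"

lemma piece_inv_T: "l < L \<Longrightarrow> r \<in> piece l \<Longrightarrow> piece_inv l (T r) = r"
  using inj_on_piece by (simp add: piece_inv_def the_inv_into_f_f)

lemma piece_preimage_eq: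
  assumes l: "l < L"
  shows "{r \<in> piece l. T r = x \<and> r \<le> b} =
    (if x \<in> T ` (piece l \<inter> {..b}) then {piece_inv l x} else {})"
  using piece_inv_T[OF l] by force

lemma preimage_cdf_eq_sum_piece_weight: "preimage_cdf T A x b = (\<Sum>l<L. piece_weight l b x)"
proof -
  let ?S = "\<lambda>l. {r \<in> piece l. T r = x \<and> r \<le> b}"
  have "{r \<in> A. T r = x \<and> r \<le> b} = (\<Union>l<L. ?S l)"
    by (auto simp: partition_set_eq)
  then have "preimage_cdf T A x b = (\<Sum>r\<in>(\<Union>l<L. ?S l). 1 / \<bar>deriv T r\<bar>)"
    by (simp add: preimage_cdf_def)
  also have "\<dots> = (\<Sum>l<L. \<Sum>r\<in>?S l. 1 / \<bar>deriv T r\<bar>)"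
  proof (rule sum.UNION_disjoint)
    show "\<forall>l\<in>{..<L}. finite (?S l)"
      by (simp add: piece_preimage_eq)
    show "\<forall>i\<in>{..<L}. \<forall>j\<in>{..<L}. i \<noteq> j \<longrightarrow> ?S i \<inter> ?S j = {}"
      using disjoint_pieces by blast
  qed simp
  also have "\<dots> = (\<Sum>l<L. piece_weight l b x)"
    by (intro sum.cong refl) (simp add: piece_preimage_eq piece_weight_def)
  finally show ?thesis .
qed

lemma piece_weight_T:
  "l < L \<Longrightarrow> r \<in> piece l \<Longrightarrow> piece_weight l b (T r) = (if r \<le> b then 1 / \<bar>deriv T r\<bar> else 0)"
proof -
  assume l: "l < L" and r: "r \<in> piece l"
  have "T r \<in> T ` (piece l \<inter> {..b}) \<longleftrightarrow> r \<le> b"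
    using r inj_on_piece[OF l] by (auto simp: inj_on_def)
  then show ?thesis
    by (simp add: piece_weight_def piece_inv_T[OF l r])
qed

lemma piece_weight_nonneg: "piece_weight l b x \<ge> 0"
  by (simp add: piece_weight_def)

lemma isCont_piece_inv:
  assumes l: "l < L" and r: "r \<in> piece l"
  shows "isCont (piece_inv l) (T r)"
proof -
  obtain d where d: "d > 0" "cball r d \<subseteq> piece l"
    using open_piece r open_contains_cball by blast
  show ?thesis
  proof (rule isCont_inverse_function[where f=T and x=r, OF d(1)])
    fix z assume "\<bar>z - r\<bar> \<le> d"
    then have z: "z \<in> piece l"
      using d(2) by (auto simp: dist_real_def)
    then show "piece_inv l (T z) = z"
      by (rule piece_inv_T[OF l])
    show "isCont T z"
      using has_real_derivative_piece[OF l z] by (rule DERIV_isCont)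
  qed
qed

lemma borel_measurable_piece_weight:
  assumes l: "l < L" shows "piece_weight l b \<in> borel_measurable borel"
proof -
  let ?E = "T ` (piece l \<inter> {..b})"
  have "connected ?E"
    using continuous_on_piece[OF l, of "piece l \<inter> {..b}"]
    by (intro connected_continuous_image) (auto simp: piece_def is_interval_connected_1[symmetric] is_interval_def)
  then have E: "?E \<in> sets borel"
    by (intro real_interval_borel_measurable) (simp add: is_interval_connected_1)
  have "continuous_on ?E (\<lambda>x. 1 / \<bar>deriv T (piece_inv l x)\<bar>)"
  proof (intro continuous_at_imp_continuous_on ballI)
    fix y assume "y \<in> ?E"
    then obtain r where r: "r \<in> piece l" "y = T r"
      by auto
    have "isCont (deriv T) (piece_inv l (T r))"
      using r continuous_on_deriv_piece[OF l] open_piece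
      by (simp add: piece_inv_T[OF l] continuous_on_eq_continuous_at)
    then have "isCont (\<lambda>x. deriv T (piece_inv l x)) (T r)"
      using isCont_piece_inv[OF l r(1)] by (rule isCont_o2[rotated])
    moreover have "deriv T (piece_inv l (T r)) \<noteq> 0"
      using r deriv_nonzero[OF l] by (simp add: piece_inv_T[OF l])
    ultimately show "isCont (\<lambda>x. 1 / \<bar>deriv T (piece_inv l x)\<bar>) y"
      using r(2) by (intro continuous_intros) auto
  qed
  then have "(\<lambda>x. if x \<in> ?E then 1 / \<bar>deriv T (piece_inv l x)\<bar> else 0) \<in> borel_measurable borel"
    by (rule borel_measurable_continuous_on_if[OF E]) (auto intro: continuous_on_const)
  then show ?thesis
    by (simp add: piece_weight_def[abs_def])
qed

lemma borel_measurable_preimage_cdf: "(\<lambda>x. preimage_cdf T A x b) \<in> borel_measurable borel"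
  unfolding preimage_cdf_eq_sum_piece_weight using borel_measurable_piece_weight by auto

lemma sets_piece_preimage:
  assumes l: "l < L" and B: "B \<in> sets borel"
  shows "{r \<in> piece l. r \<le> b \<and> T r \<in> B} \<in> sets borel"
proof -
  have "{r \<in> piece l. r \<le> b \<and> T r \<in> B} = piece l \<inter> {..b} \<inter> ({0..1} \<inter> T -` B)"
    using piece_subset[OF l] by auto
  then show ?thesis
    using sets_preimage[OF B] sets_piece by simp
qed

lemma emeasure_piece_preimage_finite:
  "l < L \<Longrightarrow> emeasure lborel {r \<in> piece l. r \<le> b \<and> T r \<in> B} < \<infinity>"
proof -
  assume l: "l < L"
  have "emeasure lborel {r \<in> piece l. r \<le> b \<and> T r \<in> B} \<le> emeasure lborel {0..1::real}"
    using piece_subset[OF l] by (intro emeasure_mono) auto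
  then show ?thesis
    using order.strict_trans1[OF _ ennreal_one_less_top] by simp
qed

text \<open>Change of variables r = piece_inv l v on one piece: the weight 1/|T'| is exactly the
  Jacobian of the inverse branch.\<close>
lemma has_integral_piece_weight:
  assumes l: "l < L" and B: "B \<in> sets borel"
  shows "((\<lambda>v. piece_weight l b v * indicator B v) has_integral
      measure lborel {r \<in> piece l. r \<le> b \<and> T r \<in> B}) (T ` piece l)"
proof -
  define Q where "Q = {r \<in> piece l. r \<le> b \<and> T r \<in> B}"
  define f where "f v = piece_weight l b v * indicator B v" for v
  have "((\<lambda>x. 1) has_integral measure lborel Q) Q"
    using has_integral_measure_lborel[OF sets_piece_preimage[OF l B] emeasure_piece_preimage_finite[OF l]]
    by (simp add: Q_def)
  then have "((\<lambda>x. if x \<in> Q then 1 else 0) has_integral measure lborel Q) (piece l)"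
    by (subst has_integral_restrict) (auto simp: Q_def)
  moreover have "\<bar>deriv T x\<bar> * f (T x) = (if x \<in> Q then 1 else 0)" if "x \<in> piece l" for x
    using piece_weight_T[OF l that, of b] deriv_nonzero[OF l that] that
    by (auto simp: f_def Q_def indicator_def)
  ultimately have integral_piece: "((\<lambda>x. \<bar>deriv T x\<bar> * f (T x)) has_integral measure lborel Q) (piece l)"
    by (subst has_integral_cong) auto
  then have "(\<lambda>x. \<bar>deriv T x\<bar> * f (T x)) absolutely_integrable_on piece l"
    by (intro nonnegative_absolutely_integrable_1) (auto simp: f_def piece_weight_nonneg)
  then have "f absolutely_integrable_on (T ` piece l) \<and> integral (T ` piece l) f = measure lborel Q"
    using integral_piece
  proof (subst has_absolute_integral_change_of_variables_1'[symmetric])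
    show "\<And>x. x \<in> piece l \<Longrightarrow> (T has_field_derivative deriv T x) (at x within piece l)"
      using has_real_derivative_piece[OF l] by (auto intro: has_field_derivative_at_within)
  qed (auto simp: integral_unique sets_piece inj_on_piece[OF l])
  then show ?thesis
    unfolding f_def[abs_def] Q_def using absolutely_integrable_on_def integrable_integral by metis
qed

lemma nn_integral_piece_weight:
  assumes l: "l < L" and B: "B \<in> sets borel"
  shows "(\<integral>\<^sup>+v. ennreal (piece_weight l b v) * indicator B v \<partial>lborel)
    = emeasure lborel {r \<in> piece l. r \<le> b \<and> T r \<in> B}"
proof -
  have "(\<integral>\<^sup>+v. ennreal (indicator (T ` piece l) v * (piece_weight l b v * indicator B v)) \<partial>lborel)
      = ennreal (measure lborel {r \<in> piece l. r \<le> b \<and> T r \<in> B})"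
    by (rule nn_integral_has_integral_lebesgue[OF _ has_integral_piece_weight[OF l B]])
      (simp add: piece_weight_nonneg)
  also have "\<dots> = emeasure lborel {r \<in> piece l. r \<le> b \<and> T r \<in> B}"
    using emeasure_piece_preimage_finite[OF l, of b B] by (simp add: emeasure_eq_ennreal_measure)
  also have "(\<lambda>v. ennreal (indicator (T ` piece l) v * (piece_weight l b v * indicator B v)))
      = (\<lambda>v. ennreal (piece_weight l b v) * indicator B v)"
    by (intro ext) (auto simp: piece_weight_def split: split_indicator)
  finally show ?thesis .
qed

lemma nn_integral_preimage_cdf:
  assumes B: "B \<in> sets borel"
  shows "(\<integral>\<^sup>+v. ennreal (preimage_cdf T A v b) * indicator B v \<partial>lborel)
    = emeasure lborel {u \<in> {0..1}. u \<le> b \<and> T u \<in> B}"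
proof -
  let ?Q = "\<lambda>l. {r \<in> piece l. r \<le> b \<and> T r \<in> B}"
  have "ennreal (preimage_cdf T A v b) * indicator B v
      = (\<Sum>l<L. ennreal (piece_weight l b v) * indicator B v)" for v
    by (simp add: preimage_cdf_eq_sum_piece_weight piece_weight_nonneg flip: sum_distrib_right)
  then have "(\<integral>\<^sup>+v. ennreal (preimage_cdf T A v b) * indicator B v \<partial>lborel)
      = (\<integral>\<^sup>+v. (\<Sum>l<L. ennreal (piece_weight l b v) * indicator B v) \<partial>lborel)"
    by simp
  also have "\<dots> = (\<Sum>l<L. \<integral>\<^sup>+v. ennreal (piece_weight l b v) * indicator B v \<partial>lborel)"
    using B borel_measurable_piece_weight by (intro nn_integral_sum) auto
  also have "\<dots> = (\<Sum>l<L. emeasure lborel (?Q l))"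
    using B by (simp add: nn_integral_piece_weight)
  also have "\<dots> = emeasure lborel (\<Union>l<L. ?Q l)"
    using B disjoint_pieces
    by (intro sum_emeasure) (auto simp: sets_piece_preimage disjoint_family_on_def)
  also have "\<dots> = emeasure lborel {u \<in> {0..1}. u \<le> b \<and> T u \<in> B}"
  proof (rule emeasure_eq_AE)
    have "AE x in lborel. x \<notin> a ` {..L}"
      by (intro AE_not_in countable_imp_null_set_lborel) auto
    then show "AE x in lborel. x \<in> (\<Union>l<L. ?Q l) \<longleftrightarrow> x \<in> {u \<in> {0..1}. u \<le> b \<and> T u \<in> B}"
    proof eventually_elim
      case (elim x)
      then show ?case
        using partition_set_subset Icc_minus_endpoints_subset by (auto simp: partition_set_eq)
    qed
    have "{u \<in> {0..1}. u \<le> b \<and> T u \<in> B} = {..b} \<inter> ({0..1} \<inter> T -` B)"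
      by auto
    then show "{u \<in> {0..1}. u \<le> b \<and> T u \<in> B} \<in> sets lborel"
      using sets_preimage[OF B] by simp
  qed (use B sets_piece_preimage in auto)
  finally show ?thesis .
qed

lemma AE_preimage_cdf_one: "AE x in lborel. x \<in> {0..1} \<longrightarrow> preimage_cdf T A x 1 = 1"
proof -
  have "density lborel (\<lambda>v. ennreal (preimage_cdf T A v 1)) = density lborel (indicator {0..1})"
  proof (rule measure_eqI)
    fix B :: "real set" assume "B \<in> sets (density lborel (\<lambda>v. ennreal (preimage_cdf T A v 1)))"
    then have B: "B \<in> sets borel"
      by simp
    have "{u \<in> {0..1}. u \<le> 1 \<and> T u \<in> B} = {0..1} \<inter> T -` B"
      by auto
    then have "emeasure (density lborel (\<lambda>v. ennreal (preimage_cdf T A v 1))) B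
        = emeasure lborel ({0..1} \<inter> B)"
      using B borel_measurable_preimage_cdf
      by (simp add: emeasure_density nn_integral_preimage_cdf emeasure_preimage)
    also have "\<dots> = emeasure (density lborel (indicator {0..1})) B"
      using B by (simp add: emeasure_restricted)
    finally show "emeasure (density lborel (\<lambda>v. ennreal (preimage_cdf T A v 1))) B
        = emeasure (density lborel (indicator {0..1})) B" .
  qed simp
  then have "AE x in lborel. ennreal (preimage_cdf T A x 1) = indicator {0..1} x"
    using borel_measurable_preimage_cdf by (subst (asm) sigma_finite_measure.density_unique_iff[OF sigma_finite_lborel]) auto
  then show ?thesis
    by eventually_elim (auto simp: indicator_def split: if_splits)
qed

section \<open>The stochastic inverse\<close>

lemma finite_preimage: "finite {r \<in> A. T r = x}"
proof -
  have "{r \<in> A. T r = x} = (\<Union>l<L. {r \<in> piece l. T r = x \<and> r \<le> 1})"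
    using piece_subset by (force simp: partition_set_eq)
  then show ?thesis
    by (simp add: piece_preimage_eq)
qed

lemma inverse_abs_deriv_pos: "r \<in> A \<Longrightarrow> 1 / \<bar>deriv T r\<bar> > 0"
  using deriv_nonzero partition_set_eq by auto

lemma preimage_cdf_nonneg: "0 \<le> preimage_cdf T A x t"
  by (simp add: preimage_cdf_def sum_nonneg)

lemma preimage_cdf_mono: "s \<le> t \<Longrightarrow> preimage_cdf T A x s \<le> preimage_cdf T A x t"
  unfolding preimage_cdf_def
  by (rule sum_mono2) (auto intro: finite_subset[OF _ finite_preimage] less_imp_le inverse_abs_deriv_pos)

lemma preimage_cdf_le_at_one: "preimage_cdf T A x t \<le> preimage_cdf T A x 1"
  unfolding preimage_cdf_def using partition_set_subset
  by (intro sum_mono2) (auto intro: finite_subset[OF _ finite_preimage] less_imp_le inverse_abs_deriv_pos)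

lemma preimage_cdf_eq_0: "{r \<in> A. T r = x \<and> r \<le> t} = {} \<Longrightarrow> preimage_cdf T A x t = 0"
  by (simp only: preimage_cdf_def sum.empty)

lemma preimage_cdf_pos_iff: "0 < preimage_cdf T A x 1 \<longleftrightarrow> x \<in> T ` A"
proof
  assume "0 < preimage_cdf T A x 1"
  then have "{r \<in> A. T r = x \<and> r \<le> 1} \<noteq> {}"
    using preimage_cdf_eq_0 by force
  then show "x \<in> T ` A"
    by auto
next
  assume "x \<in> T ` A"
  then obtain r where "r \<in> A" "T r = x"
    by auto
  moreover have "r \<le> 1"
    using \<open>r \<in> A\<close> partition_set_subset by auto
  ultimately show "0 < preimage_cdf T A x 1"
    unfolding preimage_cdf_def using inverse_abs_deriv_pos
    by (intro sum_pos2[of _ r]) (auto intro: finite_subset[OF _ finite_preimage] less_imp_le)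
qed

text \<open>t \<mapsto> preimage_cdf T A x t is a step function jumping only at the preimages of x.\<close>
lemma preimage_cdf_Max:
  assumes "{r \<in> A. T r = x \<and> r \<le> t} \<noteq> {}"
  shows "preimage_cdf T A x (Max {r \<in> A. T r = x \<and> r \<le> t}) = preimage_cdf T A x t"
proof -
  let ?P = "{r \<in> A. T r = x \<and> r \<le> t}"
  have "finite ?P"
    by (rule finite_subset[OF _ finite_preimage[of x]]) auto
  have "Max ?P \<in> ?P"
    using \<open>finite ?P\<close> assms by (rule Max_in)
  moreover have "r \<le> Max ?P" if "r \<in> ?P" for r
    using \<open>finite ?P\<close> that by (rule Max_ge)
  ultimately have "{r \<in> A. T r = x \<and> r \<le> Max ?P} = ?P"
    by (auto intro: order_trans)
  then show ?thesis
    by (simp add: preimage_cdf_def)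
qed

lemma preimage_cdf_ge_eq_atLeast:
  assumes z: "0 < z" "z \<le> preimage_cdf T A x 1"
  shows "{t. z \<le> preimage_cdf T A x t} = {Min {r \<in> A. T r = x \<and> z \<le> preimage_cdf T A x r}..}"
proof -
  let ?G = "preimage_cdf T A x"
  let ?S = "{r \<in> A. T r = x \<and> z \<le> ?G r}"
  have le_Max: "Max {r \<in> A. T r = x \<and> r \<le> t} \<in> ?S \<and> Max {r \<in> A. T r = x \<and> r \<le> t} \<le> t"
    if "z \<le> ?G t" for t
  proof -
    let ?P = "{r \<in> A. T r = x \<and> r \<le> t}"
    have "finite ?P"
      by (rule finite_subset[OF _ finite_preimage[of x]]) auto
    moreover have "?P \<noteq> {}"
      using that z(1) preimage_cdf_eq_0 by force
    ultimately have "Max ?P \<in> ?P"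
      by (rule Max_in)
    then show ?thesis
      using preimage_cdf_Max[OF \<open>?P \<noteq> {}\<close>] that by simp
  qed
  have "finite ?S"
    by (rule finite_subset[OF _ finite_preimage[of x]]) auto
  moreover have "?S \<noteq> {}"
    using le_Max[OF z(2)] by blast
  ultimately have "Min ?S \<in> ?S"
    by (rule Min_in)
  show ?thesis
  proof (intro set_eqI iffI)
    fix t assume "t \<in> {t. z \<le> ?G t}"
    then show "t \<in> {Min ?S..}"
      using le_Max Min_le[OF \<open>finite ?S\<close>] by (fastforce intro: order_trans)
  next
    fix t assume "t \<in> {Min ?S..}"
    then have "?G (Min ?S) \<le> ?G t"
      by (simp add: preimage_cdf_mono)
    moreover have "z \<le> ?G (Min ?S)"
      using \<open>Min ?S \<in> ?S\<close> by simp
    ultimately show "t \<in> {t. z \<le> ?G t}"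
      by simp
  qed
qed

lemma stoch_inv_le_iff:
  assumes z: "0 < z" "z \<le> preimage_cdf T A x 1"
  shows "stoch_inv T A x z \<le> b \<longleftrightarrow> z \<le> preimage_cdf T A x b"
proof -
  have "x \<in> T ` A"
    using z by (simp flip: preimage_cdf_pos_iff)
  then have "stoch_inv T A x z = Min {r \<in> A. T r = x \<and> z \<le> preimage_cdf T A x r}"
    by (simp add: stoch_inv_def gen_inv_def preimage_cdf_ge_eq_atLeast[OF z])
  then show ?thesis
    using preimage_cdf_ge_eq_atLeast[OF z] by (metis atLeast_iff mem_Collect_eq)
qed

text \<open>Off the range 0 < z \<le> preimage_cdf T A x 1 the generalized inverse is an infimum of
  UNIV or of the empty set, i.e. an unspecified real; only its measurability matters.\<close>
lemma stoch_inv_le_iff_cases: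
  "stoch_inv T A x z \<le> b \<longleftrightarrow>
     (preimage_cdf T A x 1 \<le> 0 \<and> 0 \<le> b) \<or>
     (0 < preimage_cdf T A x 1 \<and> z \<le> 0 \<and> Inf (UNIV :: real set) \<le> b) \<or>
     (0 < preimage_cdf T A x 1 \<and> preimage_cdf T A x 1 < z \<and> Inf ({} :: real set) \<le> b) \<or>
     (0 < z \<and> z \<le> preimage_cdf T A x 1 \<and> z \<le> preimage_cdf T A x b)"
proof (cases "x \<in> T ` A")
  case False
  then show ?thesis
    using preimage_cdf_pos_iff[of x] by (auto simp: stoch_inv_def)
next
  case True
  then have pos: "0 < preimage_cdf T A x 1"
    by (simp add: preimage_cdf_pos_iff)
  consider "z \<le> 0" | "preimage_cdf T A x 1 < z" | "0 < z" "z \<le> preimage_cdf T A x 1"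
    by linarith
  then show ?thesis
  proof cases
    case 1
    then have "{t. z \<le> preimage_cdf T A x t} = UNIV"
      using preimage_cdf_nonneg[of x] by (auto intro: order_trans[OF 1])
    then show ?thesis
      using True pos 1 by (simp add: stoch_inv_def gen_inv_def)
  next
    case 2
    then have "\<not> z \<le> preimage_cdf T A x t" for t
      using preimage_cdf_le_at_one[of x t] by linarith
    then have "{t. z \<le> preimage_cdf T A x t} = {}"
      by simp
    then show ?thesis
      using True pos 2 by (simp add: stoch_inv_def gen_inv_def)
  next
    case 3
    then show ?thesis
      using stoch_inv_le_iff[OF 3] pos by auto
  qed
qed

lemma borel_measurable_stoch_inv: "(\<lambda>p. stoch_inv T A (fst p) (snd p)) \<in> borel_measurable borel"
proof (rule borel_measurableI_le)
  fix b :: real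
  note borel_measurable_preimage_cdf[measurable]
  have "Measurable.pred (borel \<Otimes>\<^sub>M borel) (\<lambda>p :: real \<times> real. stoch_inv T A (fst p) (snd p) \<le> b)"
    unfolding stoch_inv_le_iff_cases by measurable
  then show "{p \<in> space borel. stoch_inv T A (fst p) (snd p) \<le> b} \<in> sets borel"
    by (simp add: pred_def borel_prod)
qed

lemma AE_preimage_cdf_one_distributed:
  assumes "prob_space M" and "distributed M lborel V (indicator {0..1})"
  shows "AE \<omega> in M. preimage_cdf T A (V \<omega>) 1 = 1"
  using AE_preimage_cdf_one borel_measurable_preimage_cdf
  by (subst prob_space.distributed_AE2[OF assms]) (auto simp: indicator_def)

lemma AE_preimage_cdf_in_unit_interval:
  assumes "prob_space M" and "distributed M lborel V (indicator {0..1})"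
  shows "AE \<omega> in M. preimage_cdf T A (V \<omega>) b \<in> {0..1}"
  using AE_preimage_cdf_one_distributed[OF assms] by (rule eventually_mono)
    (metis atLeastAtMost_iff preimage_cdf_le_at_one preimage_cdf_nonneg)

lemma AE_stoch_inv_le_iff:
  assumes M: "prob_space M"
    and V: "distributed M lborel V (indicator {0..1})"
    and Z: "distributed M lborel Z (indicator {0..1})"
  shows "AE \<omega> in M. stoch_inv T A (V \<omega>) (Z \<omega>) \<le> b \<longleftrightarrow> Z \<omega> \<le> preimage_cdf T A (V \<omega>) b"
proof -
  have "AE x in lborel. 0 < (indicator {0..1} x :: ennreal) \<longrightarrow> x \<noteq> 0 \<and> x \<in> {0..1}"
    using AE_lborel_singleton[of 0] by eventually_elim (simp add: indicator_def)
  then have "AE \<omega> in M. Z \<omega> \<noteq> 0 \<and> Z \<omega> \<in> {0..1}"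
    by (subst prob_space.distributed_AE2[OF M Z]) auto
  with AE_preimage_cdf_one_distributed[OF M V] show ?thesis
    by eventually_elim (auto intro!: stoch_inv_le_iff)
qed

end

section \<open>Transforming a copula coordinatewise\<close>

lemma unit_cube_eq_Icc: "unit_cube = {0..(1::real^'d)}"
  by (auto simp: unit_cube_def less_eq_vec_def)

text \<open>Each T i is only known to be measurable on [0,1]; cutting it off outside [0,1] gives a
  globally Borel map of \<real>^d that agrees with u \<mapsto> (\<chi> i. T i (u $ i)) on the unit cube.\<close>
lemma borel_measurable_clipped_transform:
  fixes T :: "'d::finite \<Rightarrow> real \<Rightarrow> real"
  assumes "\<And>i. regular_udp (T i) (a i) (L i)"
  shows "(\<lambda>u. \<chi> i. indicator {0..1} (u $ i) * T i (u $ i)) \<in> borel_measurable borel"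
  using regular_udp_transform.borel_measurable_indicator_mult assms
  by (intro borel_measurable_vec)
    (simp add: regular_udp_transform_def measurable_compose[OF borel_measurable_nth])

lemma borel_measurable_copula_transform:
  fixes T :: "'d::finite \<Rightarrow> real \<Rightarrow> real" and c :: "real^'d \<Rightarrow> ennreal"
  assumes T_reg: "\<And>i. regular_udp (T i) (a i) (L i)" and c: "c \<in> borel_measurable borel"
  shows "(\<lambda>u. indicator unit_cube u * c (\<chi> i. T i (u $ i))) \<in> borel_measurable borel"
proof -
  have "(\<lambda>u. indicator unit_cube u * c (\<chi> i. T i (u $ i)))
      = (\<lambda>u. indicator unit_cube u * c (\<chi> i. indicator {0..1} (u $ i) * T i (u $ i)))"
    by (rule ext) (auto simp: indicator_def unit_cube_def intro!: arg_cong[where f=c])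
  then show ?thesis
    using measurable_compose[OF borel_measurable_clipped_transform[OF T_reg] c]
    by (simp add: unit_cube_eq_Icc)
qed

lemma borel_measurable_prod_preimage_cdf:
  fixes T :: "'d::finite \<Rightarrow> real \<Rightarrow> real" and b :: "real^'d"
  assumes "\<And>i. regular_udp (T i) (a i) (L i)"
  shows "(\<lambda>v. \<Prod>i\<in>UNIV. ennreal (preimage_cdf (T i) (partition_set (a i) (L i)) (v $ i) (b $ i)))
    \<in> borel_measurable borel"
proof -
  note regular_udp_transform.borel_measurable_preimage_cdf[measurable]
  show ?thesis
    using assms by (simp add: regular_udp_transform_def) measurable
qed

lemma distr_density_box_componentwise_udp:
  fixes T :: "'d::finite \<Rightarrow> real \<Rightarrow> real" and b :: "real^'d"
  assumes T_reg: "\<And>i. regular_udp (T i) (a i) (L i)"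
  shows "distr (density lborel (indicator (unit_cube \<inter> {..b}))) lborel
      (\<lambda>u. \<chi> i. indicator {0..1} (u $ i) * T i (u $ i))
    = density lborel (\<lambda>v. \<Prod>i\<in>UNIV. ennreal (preimage_cdf (T i) (partition_set (a i) (L i)) (v $ i) (b $ i)))"
    (is "distr ?D lborel ?\<Phi> = density lborel ?H")
proof (rule measure_eqI_atMost)
  fix c :: "real^'d"
  have R: "regular_udp_transform (T i) (a i) (L i)" for i
    using T_reg by (simp add: regular_udp_transform_def)
  define S where "S i = {x \<in> {0..1}. x \<le> b $ i \<and> T i x \<in> {..c $ i}}" for i
  have S: "S i \<in> sets borel" for i
  proof -
    have "S i = {..b $ i} \<inter> ({0..1} \<inter> T i -` {..c $ i})"
      by (auto simp: S_def)
    then show ?thesis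
      using regular_udp_transform.sets_preimage[OF R, of "{..c $ i}" i] by simp
  qed
  have \<Phi>[measurable]: "?\<Phi> \<in> borel_measurable borel"
    using T_reg by (rule borel_measurable_clipped_transform)
  have "emeasure (distr ?D lborel ?\<Phi>) {..c}
      = (\<integral>\<^sup>+u. indicator (unit_cube \<inter> {..b}) u * indicator (?\<Phi> -` {..c}) u \<partial>lborel)"
    using measurable_sets[OF \<Phi>, of "{..c}"]
    by (subst emeasure_distr) (simp_all add: emeasure_density unit_cube_eq_Icc)
  also have "\<dots> = (\<integral>\<^sup>+u. (\<Prod>i\<in>UNIV. indicator (S i) (u $ i)) \<partial>lborel)"
    unfolding prod_indicator_vec
    by (intro nn_integral_cong) (auto simp: indicator_def S_def unit_cube_def less_eq_vec_def)
  also have "\<dots> = (\<Prod>i\<in>UNIV. \<integral>\<^sup>+x. indicator (S i) x \<partial>lborel)"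
    by (rule nn_integral_lborel_prod_vec) (use S in simp)
  also have "\<dots> = (\<Prod>i\<in>UNIV. emeasure lborel (S i))"
    using S by simp
  finally have lhs: "emeasure (distr ?D lborel ?\<Phi>) {..c} = (\<Prod>i\<in>UNIV. emeasure lborel (S i))" .
  note preimage_cdf[measurable] = regular_udp_transform.borel_measurable_preimage_cdf[OF R]
  have "emeasure (density lborel ?H) {..c}
      = (\<integral>\<^sup>+v. (\<Prod>i\<in>UNIV. ennreal (preimage_cdf (T i) (partition_set (a i) (L i)) (v $ i) (b $ i))
          * indicator {..c $ i} (v $ i)) \<partial>lborel)"
    by (simp add: emeasure_density indicator_atMost_vec prod.distrib)
  also have "\<dots> = (\<Prod>i\<in>UNIV. \<integral>\<^sup>+x. ennreal (preimage_cdf (T i) (partition_set (a i) (L i)) x (b $ i))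
      * indicator {..c $ i} x \<partial>lborel)"
    by (rule nn_integral_lborel_prod_vec) measurable
  also have "\<dots> = (\<Prod>i\<in>UNIV. emeasure lborel (S i))"
    by (simp add: regular_udp_transform.nn_integral_preimage_cdf[OF R] S_def)
  finally show "emeasure (distr ?D lborel ?\<Phi>) {..c} = emeasure (density lborel ?H) {..c}"
    using lhs by simp
  have "emeasure lborel (S i) \<le> emeasure lborel {0..1::real}" for i
    using S by (intro emeasure_mono) (auto simp: S_def)
  then have "emeasure lborel (S i) < \<infinity>" for i
    using order.strict_trans1[OF _ ennreal_one_less_top] by simp
  then have "emeasure lborel (S i) \<noteq> \<infinity>" for i
    by (simp add: less_top)
  then show "emeasure (distr ?D lborel ?\<Phi>) {..c} \<noteq> \<infinity>"
    using lhs by (simp add: ennreal_prod_eq_top)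
qed simp_all

lemma emeasure_density_copula_transform_atMost:
  fixes T :: "'d::finite \<Rightarrow> real \<Rightarrow> real" and c :: "real^'d \<Rightarrow> ennreal"
  assumes T_reg: "\<And>i. regular_udp (T i) (a i) (L i)" and c: "c \<in> borel_measurable borel"
  shows "emeasure (density lborel (\<lambda>u. indicator unit_cube u * c (\<chi> i. T i (u $ i)))) {..b}
    = (\<integral>\<^sup>+v. c v * (\<Prod>i\<in>UNIV. ennreal (preimage_cdf (T i) (partition_set (a i) (L i)) (v $ i) (b $ i))) \<partial>lborel)"
proof -
  let ?\<Phi> = "\<lambda>u. \<chi> i. indicator {0..1} (u $ i) * T i (u $ i)"
  let ?D = "density lborel (indicator (unit_cube \<inter> {..b}))"
  have \<Phi>: "?\<Phi> \<in> borel_measurable borel"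
    using T_reg by (rule borel_measurable_clipped_transform)
  have "indicator unit_cube u * c (\<chi> i. T i (u $ i)) * indicator {..b} u
      = indicator (unit_cube \<inter> {..b}) u * c (?\<Phi> u)" for u
    by (auto simp: indicator_def unit_cube_def intro!: arg_cong[where f=c])
  then have "emeasure (density lborel (\<lambda>u. indicator unit_cube u * c (\<chi> i. T i (u $ i)))) {..b}
      = (\<integral>\<^sup>+u. indicator (unit_cube \<inter> {..b}) u * c (?\<Phi> u) \<partial>lborel)"
    using borel_measurable_copula_transform[OF T_reg c] by (simp add: emeasure_density)
  also have "\<dots> = (\<integral>\<^sup>+u. c (?\<Phi> u) \<partial>?D)"
    using measurable_compose[OF \<Phi> c] by (simp add: nn_integral_density unit_cube_eq_Icc)
  also have "\<dots> = (\<integral>\<^sup>+v. c v \<partial>distr ?D lborel ?\<Phi>)"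
    using \<Phi> c by (simp add: nn_integral_distr)
  also have "\<dots> = (\<integral>\<^sup>+v. c v \<partial>density lborel
      (\<lambda>v. \<Prod>i\<in>UNIV. ennreal (preimage_cdf (T i) (partition_set (a i) (L i)) (v $ i) (b $ i))))"
    by (simp only: distr_density_box_componentwise_udp[OF T_reg])
  also have "\<dots> = (\<integral>\<^sup>+v. c v * (\<Prod>i\<in>UNIV. ennreal (preimage_cdf (T i) (partition_set (a i) (L i)) (v $ i) (b $ i))) \<partial>lborel)"
    using c borel_measurable_prod_preimage_cdf[OF T_reg]
    by (subst nn_integral_density) (auto simp: mult.commute)
  finally show ?thesis .
qed

lemma borel_measurable_stoch_inv_vec:
  fixes V Z :: "'a \<Rightarrow> real^'d" and T :: "'d \<Rightarrow> real \<Rightarrow> real"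
  assumes "\<And>i. regular_udp (T i) (a i) (L i)"
    and "\<And>i. (\<lambda>\<omega>. V \<omega> $ i) \<in> borel_measurable M" "\<And>i. (\<lambda>\<omega>. Z \<omega> $ i) \<in> borel_measurable M"
  shows "(\<lambda>\<omega>. \<chi> i. stoch_inv (T i) (partition_set (a i) (L i)) (V \<omega> $ i) (Z \<omega> $ i)) \<in> borel_measurable M"
proof (rule borel_measurable_vec)
  fix i
  have "(\<lambda>p. stoch_inv (T i) (partition_set (a i) (L i)) (fst p) (snd p)) \<in> borel_measurable borel"
    using assms(1) by (simp add: regular_udp_transform_def regular_udp_transform.borel_measurable_stoch_inv)
  from measurable_compose[OF borel_measurable_Pair[OF assms(2,3)] this]
  show "(\<lambda>\<omega>. (\<chi> i. stoch_inv (T i) (partition_set (a i) (L i)) (V \<omega> $ i) (Z \<omega> $ i)) $ i) \<in> borel_measurable M"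
    by simp
qed

lemma (in prob_space) emeasure_stoch_inv_vec_atMost:
  fixes V Z :: "'a \<Rightarrow> real^'d" and T :: "'d \<Rightarrow> real \<Rightarrow> real"
  assumes V_unif: "\<And>i. distributed M lborel (\<lambda>\<omega>. V \<omega> $ i) (indicator {0..1})"
    and Z_unif: "\<And>i. distributed M lborel (\<lambda>\<omega>. Z \<omega> $ i) (indicator {0..1})"
    and Z_indep: "indep_vars (\<lambda>_. borel) (\<lambda>i \<omega>. Z \<omega> $ i) UNIV"
    and VZ_indep: "indep_var borel V borel Z"
    and T_reg: "\<And>i. regular_udp (T i) (a i) (L i)"
  shows "emeasure (distr M lborel (\<lambda>\<omega>. \<chi> i. stoch_inv (T i) (partition_set (a i) (L i)) (V \<omega> $ i) (Z \<omega> $ i))) {..b}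
    = (\<integral>\<^sup>+\<omega>. (\<Prod>i\<in>UNIV. ennreal (preimage_cdf (T i) (partition_set (a i) (L i)) (V \<omega> $ i) (b $ i))) \<partial>M)"
proof -
  define G where "G i x t = preimage_cdf (T i) (partition_set (a i) (L i)) x t" for i x t
  define X where "X \<omega> = (\<chi> i. stoch_inv (T i) (partition_set (a i) (L i)) (V \<omega> $ i) (Z \<omega> $ i))" for \<omega>
  have R: "regular_udp_transform (T i) (a i) (L i)" for i
    using T_reg by (simp add: regular_udp_transform_def)
  note G_measurable[measurable] = regular_udp_transform.borel_measurable_preimage_cdf[OF R, folded G_def]
  have V_i[measurable]: "(\<lambda>\<omega>. V \<omega> $ i) \<in> borel_measurable M"
    and Z_i[measurable]: "(\<lambda>\<omega>. Z \<omega> $ i) \<in> borel_measurable M" for i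
    using distributed_measurable[OF V_unif] distributed_measurable[OF Z_unif] by simp_all
  have X[measurable]: "X \<in> borel_measurable M"
    unfolding X_def using T_reg V_i Z_i by (rule borel_measurable_stoch_inv_vec)
  have "AE \<omega> in M. \<forall>i\<in>UNIV. X \<omega> $ i \<le> b $ i \<longleftrightarrow> Z \<omega> $ i \<le> G i (V \<omega> $ i) (b $ i)"
    using regular_udp_transform.AE_stoch_inv_le_iff[OF R prob_space_axioms V_unif Z_unif]
    by (intro AE_finite_allI) (simp_all add: X_def G_def)
  then have "emeasure M {\<omega> \<in> space M. X \<omega> \<le> b} = emeasure M {\<omega> \<in> space M. \<forall>i. Z \<omega> $ i \<le> G i (V \<omega> $ i) (b $ i)}"
    by (intro emeasure_eq_AE) (auto simp: less_eq_vec_def)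
  also have "\<dots> = (\<integral>\<^sup>+\<omega>. (\<Prod>i\<in>UNIV. ennreal (G i (V \<omega> $ i) (b $ i))) \<partial>M)"
  proof (rule emeasure_le_indep_uniform_vec[OF Z_unif Z_indep VZ_indep, where g="\<lambda>i v. G i (v $ i) (b $ i)"])
    have "AE \<omega> in M. \<forall>i\<in>UNIV. G i (V \<omega> $ i) (b $ i) \<in> {0..1}"
      using regular_udp_transform.AE_preimage_cdf_in_unit_interval[OF R prob_space_axioms V_unif]
      by (intro AE_finite_allI) (simp_all add: G_def)
    then show "AE \<omega> in M. \<forall>i. G i (V \<omega> $ i) (b $ i) \<in> {0..1}"
      by simp
  qed measurable
  finally show ?thesis
    using X by (simp add: emeasure_distr G_def X_def[symmetric] Int_def conj_commute)
qed

theorem theorem3: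
  fixes M :: "'a measure"
    and V Z :: "'a \<Rightarrow> real^'d"
    and cstar :: "real^'d \<Rightarrow> ennreal"
    and T :: "'d \<Rightarrow> real \<Rightarrow> real"
    and a :: "'d \<Rightarrow> nat \<Rightarrow> real"
    and L :: "'d \<Rightarrow> nat"
  assumes "prob_space M"
    and V_copula: "distributed M lborel V cstar"
    and V_unif: "\<And>i. distributed M lborel (\<lambda>\<omega>. V \<omega> $ i) (indicator {0..1})"
    and Z_unif: "\<And>i. distributed M lborel (\<lambda>\<omega>. Z \<omega> $ i) (indicator {0..1})"
    and Z_indep: "prob_space.indep_vars M (\<lambda>_. borel) (\<lambda>i \<omega>. Z \<omega> $ i) UNIV"
    and VZ_indep: "prob_space.indep_var M borel V borel Z"
    and T_reg: "\<And>i. regular_udp (T i) (a i) (L i)"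
  shows "distributed M lborel
           (\<lambda>\<omega>. \<chi> i. stoch_inv (T i) (partition_set (a i) (L i)) (V \<omega> $ i) (Z \<omega> $ i))
           (\<lambda>u. indicator unit_cube u * cstar (\<chi> i. T i (u $ i)))"
proof -
  interpret prob_space M by fact
  let ?X = "\<lambda>\<omega>. \<chi> i. stoch_inv (T i) (partition_set (a i) (L i)) (V \<omega> $ i) (Z \<omega> $ i)"
  let ?f = "\<lambda>u. indicator unit_cube u * cstar (\<chi> i. T i (u $ i))"
  let ?H = "\<lambda>b v. \<Prod>i\<in>UNIV. ennreal (preimage_cdf (T i) (partition_set (a i) (L i)) (v $ i) (b $ i))"
  have cstar: "cstar \<in> borel_measurable borel"
    using distributed_borel_measurable[OF V_copula] by simp
  have X: "?X \<in> borel_measurable M"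
    using T_reg distributed_measurable[OF V_unif] distributed_measurable[OF Z_unif]
    by (intro borel_measurable_stoch_inv_vec) simp_all
  have H: "?H b \<in> borel_measurable borel" for b
    using T_reg by (rule borel_measurable_prod_preimage_cdf)
  interpret X_law: prob_space "distr M lborel ?X"
    using X by (intro prob_space_distr) simp
  have cdf_eq: "emeasure (distr M lborel ?X) {..b} = emeasure (density lborel ?f) {..b}" for b
  proof -
    have "emeasure (distr M lborel ?X) {..b} = (\<integral>\<^sup>+\<omega>. ?H b (V \<omega>) \<partial>M)"
      by (rule emeasure_stoch_inv_vec_atMost[OF V_unif Z_unif Z_indep VZ_indep T_reg])
    also have "\<dots> = (\<integral>\<^sup>+v. cstar v * ?H b v \<partial>lborel)"
      using distributed_nn_integral[OF V_copula, of "?H b"] H by simp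
    also have "\<dots> = emeasure (density lborel ?f) {..b}"
      by (simp add: emeasure_density_copula_transform_atMost[OF T_reg cstar])
    finally show ?thesis .
  qed
  have "distr M lborel ?X = density lborel ?f"
    by (rule measure_eqI_atMost[OF _ _ cdf_eq]) simp_all
  then show ?thesis
    using X borel_measurable_copula_transform[OF T_reg cstar] by (simp add: distributed_def)
qed

end
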